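(* Let $m,n\geq 1$ and let $c_0:V(K_{m,n})\to\mathbb{Z}$ be any initial chip configuration on the complete bipartite graph $K_{m,n}$. Then the sequence of configurations $(c_t)_{t\ge0}$ produced by the diffusion process is eventually periodic, i.e. there exist $t\geq 0$ and $p\geq 1$ with $c_{t+p}=c_t$.
   Context: Diffusion process: for a finite simple graph $G$ and a chip configuration $c_t:V(G)\to\mathbb{Z}$ (negative values allowed), the next configuration is defined simultaneously for every vertex $u$ by $c_{t+1}(u)=c_t(u)-|\{w\in N(u): c_t(u)>c_t(w)\}|+|\{w\in N(u): c_t(u)<c_t(w)\}|$. *)

theory Defs
  imports Main
begin

text \<open>A finite simple graph is given by a finite vertex set V and a symmetric,
irreflexive adjacency relation E on V. The neighbourhood of u is {w \<in> V. E u w}.\<close>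

definition nbhd :: "'a set \<Rightarrow> ('a \<Rightarrow> 'a \<Rightarrow> bool) \<Rightarrow> 'a \<Rightarrow> 'a set" where
  "nbhd V E u = {w \<in> V. E u w}"

definition diffusion_step ::
  "'a set \<Rightarrow> ('a \<Rightarrow> 'a \<Rightarrow> bool) \<Rightarrow> ('a \<Rightarrow> int) \<Rightarrow> ('a \<Rightarrow> int)" where
  "diffusion_step V E c = (\<lambda>u. if u \<in> V then
       c u - int (card {w \<in> nbhd V E u. c u > c w})
           + int (card {w \<in> nbhd V E u. c u < c w})
     else c u)"

definition diffusion :: "'a set \<Rightarrow> ('a \<Rightarrow> 'a \<Rightarrow> bool) \<Rightarrow> ('a \<Rightarrow> int) \<Rightarrow> nat \<Rightarrow> ('a \<Rightarrow> int)" where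
  "diffusion V E c0 t = (diffusion_step V E ^^ t) c0"

definition Kmn_V :: "nat \<Rightarrow> nat \<Rightarrow> (nat + nat) set" where
  "Kmn_V m n = Inl ` {..<m} \<union> Inr ` {..<n}"

fun Kmn_E :: "nat + nat \<Rightarrow> nat + nat \<Rightarrow> bool" where
  "Kmn_E (Inl _) (Inr _) = True"
| "Kmn_E (Inr _) (Inl _) = True"
| "Kmn_E _ _ = False"

end

theory Submission
  imports Defs "HOL-Library.FuncSet"
begin

text \<open>Write \<open>c' = c + d\<close>, where \<open>d u\<close> is the net number of chips received by \<open>u\<close>.
The flow along an edge is antisymmetric, so the total number of chips is conserved and
\<open>\<Sum>u. c u * d u\<close> is minus half the total variation of \<open>c\<close> over the edges. Hence the energy
\<open>\<Sum>u. (c u)\<^sup>2\<close> changes in one step by at most \<open>|V|\<^sup>3\<close> minus that variation, and can only grow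
while the variation is small. In \<open>K\<^sub>m\<^sub>,\<^sub>n\<close> any two vertices are adjacent or share a neighbour,
so a small variation together with the conserved chip total bounds every value, hence the
energy. Thus all values stay bounded along the orbit, only finitely many configurations occur,
and the deterministic process must revisit one of them.\<close>

definition inflow :: "'a set \<Rightarrow> ('a \<Rightarrow> 'a \<Rightarrow> bool) \<Rightarrow> ('a \<Rightarrow> int) \<Rightarrow> 'a \<Rightarrow> int" where
  "inflow V E c u = (\<Sum>w\<in>V. if E u w then sgn (c w - c u) else 0)"

definition energy :: "'a set \<Rightarrow> ('a \<Rightarrow> int) \<Rightarrow> int" where
  "energy V c = (\<Sum>u\<in>V. (c u)\<^sup>2)"

text \<open>Every edge is counted twice, once in each direction.\<close>

definition edge_variation :: "'a set \<Rightarrow> ('a \<Rightarrow> 'a \<Rightarrow> bool) \<Rightarrow> ('a \<Rightarrow> int) \<Rightarrow> int" where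
  "edge_variation V E c = (\<Sum>u\<in>V. \<Sum>w\<in>V. if E u w then \<bar>c u - c w\<bar> else 0)"

lemma edge_variation_nonneg: "0 \<le> edge_variation V E c"
  unfolding edge_variation_def by (simp add: sum_nonneg)

lemma abs_diff_le_edge_variation:
  assumes "finite V" "u \<in> V" "w \<in> V" "E u w"
  shows "\<bar>c u - c w\<bar> \<le> edge_variation V E c"
proof -
  have "\<bar>c u - c w\<bar> \<le> (\<Sum>w\<in>V. if E u w then \<bar>c u - c w\<bar> else 0)"
    using member_le_sum[OF assms(3), of "\<lambda>w. if E u w then \<bar>c u - c w\<bar> else 0"] assms
    by simp
  also have "\<dots> \<le> edge_variation V E c"
    unfolding edge_variation_def
    by (rule member_le_sum[OF assms(2)]) (simp_all add: assms(1) sum_nonneg)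
  finally show ?thesis .
qed

lemma diffusion_step_eq_inflow:
  assumes "finite V" "u \<in> V"
  shows "diffusion_step V E c u = c u + inflow V E c u"
proof -
  have count: "int (card {w \<in> nbhd V E u. P w}) = (\<Sum>w\<in>V. if E u w \<and> P w then 1 else 0)"
    for P :: "'a \<Rightarrow> bool"
  proof -
    have "{w \<in> nbhd V E u. P w} = {w \<in> V. E u w \<and> P w}" by (auto simp: nbhd_def)
    then show ?thesis
      using sum.inter_filter[OF assms(1), of "\<lambda>_. 1::int" "\<lambda>w. E u w \<and> P w"] by simp
  qed
  have "int (card {w \<in> nbhd V E u. c u < c w}) - int (card {w \<in> nbhd V E u. c u > c w})
        = inflow V E c u"
    unfolding count inflow_def sum_subtractf[symmetric]
    by (rule sum.cong) (auto simp: sgn_if)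
  then show ?thesis using assms(2) by (simp add: diffusion_step_def)
qed

lemma abs_inflow_le_card:
  assumes "finite V"
  shows "\<bar>inflow V E c u\<bar> \<le> int (card V)"
proof -
  have "\<bar>inflow V E c u\<bar> \<le> (\<Sum>w\<in>V. \<bar>if E u w then sgn (c w - c u) else 0\<bar>)"
    unfolding inflow_def by (rule sum_abs)
  also have "\<dots> \<le> (\<Sum>w\<in>V. 1)"
    by (rule sum_mono) (auto simp: abs_sgn_eq)
  finally show ?thesis by simp
qed

lemma sum_inflow_eq_0:
  assumes "\<And>u w. E u w = E w u"
  shows "(\<Sum>u\<in>V. inflow V E c u) = 0"
proof -
  define g where "g u w = (if E u w then sgn (c w - c u) else 0)" for u w
  have antisym: "g w u = - g u w" for u w
    unfolding g_def using assms[of u w] by (auto simp: sgn_if)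
  have "(\<Sum>u\<in>V. \<Sum>w\<in>V. g u w) = (\<Sum>w\<in>V. \<Sum>u\<in>V. g u w)" by (rule sum.swap)
  also have "\<dots> = (\<Sum>w\<in>V. \<Sum>u\<in>V. - g w u)" by (intro sum.cong refl) (rule antisym)
  also have "\<dots> = - (\<Sum>u\<in>V. \<Sum>w\<in>V. g u w)" by (simp add: sum_negf)
  finally show ?thesis unfolding inflow_def g_def by simp
qed

lemma sum_mult_inflow:
  assumes "\<And>u w. E u w = E w u"
  shows "2 * (\<Sum>u\<in>V. c u * inflow V E c u) = - edge_variation V E c"
proof -
  define g where "g u w = (if E u w then sgn (c w - c u) else 0)" for u w
  have antisym: "g w u = - g u w" for u w
    unfolding g_def using assms[of u w] by (auto simp: sgn_if)
  define X where "X = (\<Sum>u\<in>V. \<Sum>w\<in>V. c u * g u w)"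
  have "X = (\<Sum>w\<in>V. \<Sum>u\<in>V. c u * g u w)" unfolding X_def by (rule sum.swap)
  also have "\<dots> = (\<Sum>u\<in>V. \<Sum>w\<in>V. - (c w * g u w))"
    by (intro sum.cong refl) (metis antisym mult_minus_right)
  finally have "2 * X = X + (\<Sum>u\<in>V. \<Sum>w\<in>V. - (c w * g u w))" by simp
  also have "\<dots> = (\<Sum>u\<in>V. \<Sum>w\<in>V. c u * g u w - c w * g u w)"
    by (simp add: X_def sum.distrib[symmetric])
  also have "\<dots> = - edge_variation V E c"
    unfolding edge_variation_def sum_negf[symmetric]
    by (intro sum.cong refl) (auto simp: g_def sgn_if algebra_simps)
  finally show ?thesis by (simp add: X_def inflow_def g_def sum_distrib_left)
qed

lemma sum_diffusion_step:
  assumes "finite V" "\<And>u w. E u w = E w u"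
  shows "(\<Sum>u\<in>V. diffusion_step V E c u) = (\<Sum>u\<in>V. c u)"
  using sum_inflow_eq_0[OF assms(2), where V = V and c = c]
  by (simp add: diffusion_step_eq_inflow[OF assms(1)] sum.distrib)

lemma energy_diffusion_step_le:
  assumes "finite V" "\<And>u w. E u w = E w u"
  shows "energy V (diffusion_step V E c) \<le> energy V c - edge_variation V E c + int (card V) ^ 3"
proof -
  have "energy V (diffusion_step V E c) = (\<Sum>u\<in>V. (c u + inflow V E c u)\<^sup>2)"
    unfolding energy_def by (simp add: diffusion_step_eq_inflow[OF assms(1)])
  also have "\<dots> = energy V c + 2 * (\<Sum>u\<in>V. c u * inflow V E c u) + (\<Sum>u\<in>V. (inflow V E c u)\<^sup>2)"
    by (simp add: energy_def power2_sum sum.distrib sum_distrib_left mult.assoc)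
  also have "(\<Sum>u\<in>V. (inflow V E c u)\<^sup>2) \<le> (\<Sum>u\<in>V. (int (card V))\<^sup>2)"
    by (intro sum_mono power2_le_iff_abs_le[THEN iffD2] abs_inflow_le_card[OF assms(1)]) simp
  also have "(\<Sum>u\<in>V. (int (card V))\<^sup>2) = int (card V) ^ 3"
    by (simp add: power2_eq_square power3_eq_cube)
  finally show ?thesis using sum_mult_inflow[OF assms(2), where V = V and c = c] by simp
qed

lemma abs_le_abs_sum_plus_spread:
  assumes "finite V" "u \<in> V" "\<And>v. v \<in> V \<Longrightarrow> \<bar>c u - c v\<bar> \<le> K"
  shows "\<bar>c u\<bar> \<le> \<bar>\<Sum>v\<in>V. c v\<bar> + int (card V) * K"
proof -
  have "\<bar>int (card V) * c u - (\<Sum>v\<in>V. c v)\<bar> = \<bar>\<Sum>v\<in>V. c u - c v\<bar>"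
    by (simp add: sum_subtractf)
  also have "\<dots> \<le> (\<Sum>v\<in>V. \<bar>c u - c v\<bar>)" by (rule sum_abs)
  also have "\<dots> \<le> int (card V) * K" using sum_mono[of V _ "\<lambda>_. K"] assms(3) by simp
  finally have "\<bar>int (card V) * c u - (\<Sum>v\<in>V. c v)\<bar> \<le> int (card V) * K" .
  moreover have "\<bar>c u\<bar> \<le> \<bar>int (card V) * c u\<bar>"
    using assms(1,2) card_gt_0_iff[of V] by (auto simp: abs_mult mult_le_cancel_right1)
  ultimately show ?thesis by linarith
qed

lemma abs_le_energy:
  assumes "finite V" "u \<in> V"
  shows "\<bar>c u\<bar> \<le> energy V c"
proof -
  have "\<bar>c u\<bar> \<le> (c u)\<^sup>2"
    by (metis abs_dvd_iff abs_eq_0 dvd_triv_left power2_eq_square zdvd_imp_le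
        zero_le_power2 zero_less_power2)
  also have "\<dots> \<le> energy V c"
    unfolding energy_def by (rule member_le_sum[OF assms(2)]) (simp_all add: assms(1))
  finally show ?thesis .
qed

lemma energy_le_if_edge_variation_le:
  assumes "finite V"
    and spread: "\<And>u v. u \<in> V \<Longrightarrow> v \<in> V \<Longrightarrow> \<bar>c u - c v\<bar> \<le> D * edge_variation V E c"
    and "0 \<le> D" "edge_variation V E c \<le> K"
  shows "energy V c \<le> int (card V) * (\<bar>\<Sum>u\<in>V. c u\<bar> + int (card V) * (D * K))\<^sup>2"
proof -
  let ?R = "\<bar>\<Sum>u\<in>V. c u\<bar> + int (card V) * (D * K)"
  have "\<bar>c u - c v\<bar> \<le> D * K" if "u \<in> V" "v \<in> V" for u v
    using spread[OF that] mult_left_mono[OF assms(4,3)] by linarith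
  then have "\<bar>c u\<bar> \<le> ?R" if "u \<in> V" for u
    using abs_le_abs_sum_plus_spread[OF assms(1) that] that by blast
  then have "(c u)\<^sup>2 \<le> ?R\<^sup>2" if "u \<in> V" for u
    using that by (metis abs_ge_zero power2_abs power_mono)
  then have "energy V c \<le> (\<Sum>u\<in>V. ?R\<^sup>2)"
    unfolding energy_def by (rule sum_mono)
  then show ?thesis by simp
qed

lemma diffusion_Suc: "diffusion V E c0 (Suc t) = diffusion_step V E (diffusion V E c0 t)"
  by (simp add: diffusion_def)

lemma diffusion_outside:
  assumes "u \<notin> V"
  shows "diffusion V E c0 t u = c0 u"
  using assms by (induction t) (simp_all add: diffusion_def diffusion_step_def)

lemma sum_diffusion:
  assumes "finite V" "\<And>u w. E u w = E w u"
  shows "(\<Sum>u\<in>V. diffusion V E c0 t u) = (\<Sum>u\<in>V. c0 u)"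
  by (induction t) (simp_all add: diffusion_def sum_diffusion_step[OF assms])

lemma diffusion_energy_bounded:
  assumes "finite V" "\<And>u w. E u w = E w u" "0 \<le> D"
    and spread: "\<And>c u v. u \<in> V \<Longrightarrow> v \<in> V \<Longrightarrow> \<bar>c u - c v\<bar> \<le> D * edge_variation V E c"
  obtains B where "\<And>t. energy V (diffusion V E c0 t) \<le> B"
proof
  define N where "N = int (card V)"
  define B where
    "B = max (energy V c0) (N * (\<bar>\<Sum>u\<in>V. c0 u\<bar> + N * (D * N ^ 3))\<^sup>2 + N ^ 3)"
  show "energy V (diffusion V E c0 t) \<le> B" for t
  proof (induction t)
    case 0
    then show ?case by (simp add: B_def diffusion_def)
  next
    case (Suc t)
    let ?c = "diffusion V E c0 t"
    have step: "energy V (diffusion V E c0 (Suc t)) \<le> energy V ?c - edge_variation V E ?c + N ^ 3"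
      unfolding diffusion_Suc N_def by (rule energy_diffusion_step_le[OF assms(1,2)])
    show ?case
    proof (cases "edge_variation V E ?c \<le> N ^ 3")
      case True
      have "energy V ?c \<le> N * (\<bar>\<Sum>u\<in>V. c0 u\<bar> + N * (D * N ^ 3))\<^sup>2"
        using energy_le_if_edge_variation_le[OF assms(1) spread assms(3) True]
        by (simp add: sum_diffusion[OF assms(1,2)] N_def)
      then show ?thesis
        using step edge_variation_nonneg[of V E ?c] by (simp add: B_def)
    next
      case False
      then show ?thesis using step Suc.IH by linarith
    qed
  qed
qed

lemma finite_bounded_configurations:
  fixes B :: int and d :: "'a \<Rightarrow> int"
  assumes "finite V"
  shows "finite {c. (\<forall>u\<in>V. \<bar>c u\<bar> \<le> B) \<and> (\<forall>u. u \<notin> V \<longrightarrow> c u = d u)}"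
    (is "finite ?F")
proof (rule finite_subset)
  let ?extend = "\<lambda>g u. if u \<in> V then g u else d u"
  show "?F \<subseteq> ?extend ` (V \<rightarrow>\<^sub>E {-B..B})"
  proof
    fix c assume c: "c \<in> ?F"
    then have "c = ?extend (restrict c V)" by (auto simp: fun_eq_iff)
    moreover have "restrict c V \<in> V \<rightarrow>\<^sub>E {-B..B}" using c by (auto simp: abs_le_iff)
    ultimately show "c \<in> ?extend ` (V \<rightarrow>\<^sub>E {-B..B})" by blast
  qed
  show "finite (?extend ` (V \<rightarrow>\<^sub>E {-B..B}))"
    by (intro finite_imageI finite_PiE assms) simp
qed

lemma funpow_eventually_periodic:
  assumes "finite (range (\<lambda>t. (f ^^ t) x))"
  shows "\<exists>t p. p \<ge> 1 \<and> (f ^^ (t + p)) x = (f ^^ t) x"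
proof -
  have "\<not> inj (\<lambda>t. (f ^^ t) x)"
    using assms finite_imageD infinite_UNIV_nat by blast
  then obtain i j where "i < j" "(f ^^ i) x = (f ^^ j) x"
    unfolding inj_def by (metis linorder_neqE_nat)
  then show ?thesis by (intro exI[of _ i] exI[of _ "j - i"]) simp
qed

theorem diffusion_eventually_periodic:
  assumes "finite V" "\<And>u w. E u w = E w u" "0 \<le> D"
    and "\<And>c u v. u \<in> V \<Longrightarrow> v \<in> V \<Longrightarrow> \<bar>c u - c v\<bar> \<le> D * edge_variation V E c"
  shows "\<exists>t p. p \<ge> 1 \<and> diffusion V E c0 (t + p) = diffusion V E c0 t"
proof -
  obtain B where B: "\<And>t. energy V (diffusion V E c0 t) \<le> B"
    using diffusion_energy_bounded[OF assms] by blast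
  have "\<bar>diffusion V E c0 t u\<bar> \<le> B" if "u \<in> V" for t u
    using abs_le_energy[OF assms(1) that] B by (rule order.trans)
  then have "range (diffusion V E c0)
      \<subseteq> {c. (\<forall>u\<in>V. \<bar>c u\<bar> \<le> B) \<and> (\<forall>u. u \<notin> V \<longrightarrow> c u = c0 u)}"
    by (auto simp: diffusion_outside)
  then have "finite (range (\<lambda>t. (diffusion_step V E ^^ t) c0))"
    using finite_bounded_configurations[OF assms(1)] finite_subset
    unfolding diffusion_def by blast
  then show ?thesis
    unfolding diffusion_def by (rule funpow_eventually_periodic)
qed

lemma Kmn_E_sym: "Kmn_E u w = Kmn_E w u"
  by (cases u; cases w) auto

lemma finite_Kmn_V: "finite (Kmn_V m n)"
  by (simp add: Kmn_V_def)

text \<open>Any two vertices of \<open>K\<^sub>m\<^sub>,\<^sub>n\<close> are adjacent or have a common neighbour.\<close>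

lemma Kmn_abs_diff_le_edge_variation:
  assumes "m \<ge> 1" "n \<ge> 1" "u \<in> Kmn_V m n" "v \<in> Kmn_V m n"
  shows "\<bar>c u - c v\<bar> \<le> 2 * edge_variation (Kmn_V m n) Kmn_E c"
proof -
  let ?V = "Kmn_V m n"
  have edge: "\<bar>c x - c y\<bar> \<le> edge_variation ?V Kmn_E c"
    if "x \<in> ?V" "y \<in> ?V" "Kmn_E x y" for x y
    using finite_Kmn_V that by (rule abs_diff_le_edge_variation)
  consider "Kmn_E u v" | w where "w \<in> ?V" "Kmn_E u w" "Kmn_E w v"
  proof (cases "Kmn_E u v")
    case False
    define w :: "nat + nat" where "w = (case u of Inl _ \<Rightarrow> Inr 0 | Inr _ \<Rightarrow> Inl 0)"
    have "w \<in> ?V" "Kmn_E u w" "Kmn_E w v"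
      using assms False by (auto simp: w_def Kmn_V_def split: sum.splits)
    then show thesis using that(2) by blast
  qed
  then show ?thesis
  proof cases
    case 1
    then show ?thesis using edge[OF assms(3,4)] edge_variation_nonneg[of ?V Kmn_E c] by linarith
  next
    case (2 w)
    then show ?thesis using edge[OF assms(3) 2(1,2)] edge[OF 2(1) assms(4) 2(3)] by linarith
  qed
qed

theorem theorem13:
  fixes m n :: nat and c0 :: "nat + nat \<Rightarrow> int"
  assumes "m \<ge> 1" and "n \<ge> 1"
  shows "\<exists>t p. p \<ge> 1 \<and>
           diffusion (Kmn_V m n) Kmn_E c0 (t + p) = diffusion (Kmn_V m n) Kmn_E c0 t"
  by (rule diffusion_eventually_periodic[OF finite_Kmn_V Kmn_E_sym, where D = 2])
     (simp_all add: Kmn_abs_diff_le_edge_variation[OF assms])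

end
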